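(* Let $R$ be a ring. Then $R$ is strongly weakly nil-clean if, and only if, $R$ is both WUU and GWNC.
   Context: All rings are associative with identity. For a ring $S$, $U(S)$, ${\rm Nil}(S)$, ${\rm Id}(S)$ denote units, nilpotents, idempotents. $S$ is GWNC if every $a\in S\setminus U(S)$ can be written as $a=q+e$ or $a=q-e$ with $q\in{\rm Nil}(S)$, $e\in{\rm Id}(S)$. An element $a$ is strongly nil-clean if $a=e+b$ with $e$ idempotent, $b$ nilpotent and $eb=be$. $R$ is strongly weakly nil-clean if for every $a\in R$, $a$ or $-a$ is strongly nil-clean. $R$ is WUU if $U(R)={\rm Nil}(R)\pm 1$, i.e. every unit has the form $q+1$ or $q-1$ with $q$ nilpotent. *)

theory Defs
  imports Main
begin

definition units_of_ring :: "'a::ring_1 set" where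
  "units_of_ring = {u. \<exists>v. u * v = 1 \<and> v * u = 1}"

definition nilpotents :: "'a::ring_1 set" where
  "nilpotents = {q. \<exists>n::nat. q ^ n = 0}"

definition idempotents :: "'a::ring_1 set" where
  "idempotents = {e. e * e = e}"

definition strongly_nil_clean_elem :: "'a::ring_1 \<Rightarrow> bool" where
  "strongly_nil_clean_elem a \<longleftrightarrow>
     (\<exists>e b. e \<in> idempotents \<and> b \<in> nilpotents \<and> a = e + b \<and> e * b = b * e)"

definition strongly_weakly_nil_clean :: "'a::ring_1 itself \<Rightarrow> bool" where
  "strongly_weakly_nil_clean _ \<longleftrightarrow>
     (\<forall>a::'a. strongly_nil_clean_elem a \<or> strongly_nil_clean_elem (- a))"

definition WUU :: "'a::ring_1 itself \<Rightarrow> bool" where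
  "WUU _ \<longleftrightarrow>
     (units_of_ring :: 'a set) = {q + 1 | q. q \<in> nilpotents} \<union> {q - 1 | q. q \<in> nilpotents}"

definition GWNC :: "'a::ring_1 itself \<Rightarrow> bool" where
  "GWNC _ \<longleftrightarrow>
     (\<forall>a::'a. a \<notin> units_of_ring \<longrightarrow>
        (\<exists>q e. q \<in> nilpotents \<and> e \<in> idempotents \<and> (a = q + e \<or> a = q - e)))"

end

theory Submission
  imports Defs
begin

text \<open>
The forward direction is immediate; for the converse, WUU and GWNC together write every element
as q + e or q - e with q nilpotent and e idempotent, and it suffices to show that a - a^2 or
a + a^2 is nilpotent, since Newton's iteration e |-> 3e^2 - 2e^3 lifts a nilpotent defect a - a^2
to a strongly nil-clean decomposition.
Writing 2 = q +- e shows that 6 is nilpotent, so a central idempotent splits the ring into a part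
where 2 is nilpotent and a part where 3 is nilpotent. In the latter, 1 - 2f is a unit for every
idempotent f, so WUU forces f to be trivial and q +- e has commuting summands. In the former all
units are unipotent; applied to (1 + x)(1 + y) for square-zero x, y this puts the Peirce corners
eq(1 - e) and (1 - e)qe into the Jacobson radical, which WUU makes nil. Modulo the radical q + e
is then a commuting sum, and a - a^2 and a + a^2 differ by the nilpotent 2a^2.
\<close>

lemma power_eq_0_mono: "(x::'a::ring_1) ^ n = 0 \<Longrightarrow> n \<le> m \<Longrightarrow> x ^ m = 0"
  by (metis le_add_diff_inverse mult_zero_left power_add)

text \<open>As simplification rules these loop when both factors are numerals.\<close>

lemma numeral_mult_commute:
  fixes x :: "'a::ring_1"
  shows "numeral n * x = x * numeral n" and "numeral n * (x * z) = x * (numeral n * z)"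
  by (metis mult_of_nat_commute of_nat_numeral, metis mult.assoc mult_of_nat_commute of_nat_numeral)

lemma power_mult_commuting:
  fixes x y :: "'a::ring_1"
  assumes "x * y = y * x"
  shows "(x * y) ^ n = x ^ n * y ^ n"
proof (induction n)
  case (Suc n)
  have "(x * y) ^ Suc n = x * (y * x ^ n) * y ^ n"
    by (simp add: Suc mult.assoc)
  also have "\<dots> = x ^ Suc n * y ^ Suc n"
    by (simp only: power_commuting_commutes[OF assms, symmetric]) (simp add: mult.assoc)
  finally show ?case .
qed simp

lemma nilpotentsI: "x ^ n = 0 \<Longrightarrow> x \<in> nilpotents"
  unfolding nilpotents_def by blast

lemma nilpotentsE:
  assumes "x \<in> nilpotents"
  obtains n where "x ^ n = 0"
  using assms unfolding nilpotents_def by blast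

lemma nilpotent_mult_commuting:
  fixes x y :: "'a::ring_1"
  assumes "x * y = y * x" and "x \<in> nilpotents"
  shows "x * y \<in> nilpotents" and "y * x \<in> nilpotents"
proof -
  obtain n where "x ^ n = 0" using assms(2) by (rule nilpotentsE)
  then have "(x * y) ^ n = 0" by (simp add: power_mult_commuting[OF assms(1)])
  then show "x * y \<in> nilpotents" "y * x \<in> nilpotents"
    using assms(1) by (auto intro: nilpotentsI)
qed

lemma nilpotent_uminus_iff: "- (x::'a::ring_1) \<in> nilpotents \<longleftrightarrow> x \<in> nilpotents"
proof -
  have "- y \<in> nilpotents" if "y \<in> nilpotents" for y :: 'a
    using nilpotent_mult_commuting(1)[of y "- 1"] that by simp
  from this[of x] this[of "- x"] show ?thesis by auto
qed

lemma power_add_commuting_eq_0: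
  fixes x y :: "'a::ring_1"
  assumes xy: "x * y = y * x" and x: "x ^ m = 0" and y: "y ^ n = 0"
  shows "m + n \<le> a + b + k \<Longrightarrow> x ^ a * y ^ b * (x + y) ^ k = 0"
proof (induction k arbitrary: a b)
  case 0
  then have "m \<le> a \<or> n \<le> b" by arith
  then show ?case using power_eq_0_mono[OF x] power_eq_0_mono[OF y] by auto
next
  case (Suc k)
  have "x ^ a * y ^ b * (x + y) ^ Suc k
      = x ^ a * (y ^ b * x) * (x + y) ^ k + x ^ a * (y ^ b * y) * (x + y) ^ k"
    by (simp add: algebra_simps)
  also have "\<dots> = x ^ Suc a * y ^ b * (x + y) ^ k + x ^ a * y ^ Suc b * (x + y) ^ k"
    by (simp only: power_commuting_commutes[OF xy[symmetric]] power_Suc2 mult.assoc)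
  also have "\<dots> = 0"
    using Suc.IH[of "Suc a" b] Suc.IH[of a "Suc b"] Suc.prems by simp
  finally show ?case .
qed

lemma nilpotent_add_commuting:
  fixes x y :: "'a::ring_1"
  assumes "x * y = y * x" and "x \<in> nilpotents" and "y \<in> nilpotents"
  shows "x + y \<in> nilpotents"
proof -
  obtain m n where "x ^ m = 0" and "y ^ n = 0"
    using assms(2,3) by (meson nilpotentsE)
  from power_add_commuting_eq_0[OF assms(1) this, of 0 0 "m + n"]
  have "(x + y) ^ (m + n) = 0" by simp
  then show ?thesis by (simp add: nilpotentsI)
qed

lemma nilpotent_diff_commuting:
  fixes x y :: "'a::ring_1"
  assumes "x * y = y * x" and "x \<in> nilpotents" and "y \<in> nilpotents"
  shows "x - y \<in> nilpotents"
  using nilpotent_add_commuting[of x "- y"] assms by (simp add: nilpotent_uminus_iff)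

lemma power_mult_rotate: "((b::'a::ring_1) * a) ^ Suc n = b * (a * b) ^ n * a"
  by (induction n) (simp_all add: mult.assoc)

lemma nilpotent_mult_swap:
  assumes "(a::'a::ring_1) * b \<in> nilpotents"
  shows "b * a \<in> nilpotents"
proof -
  obtain n where "(a * b) ^ n = 0" using assms by (rule nilpotentsE)
  then have "(b * a) ^ Suc n = 0" by (simp only: power_mult_rotate) simp
  then show ?thesis by (rule nilpotentsI)
qed

lemma nilpotent_of_power_nilpotent: "(x::'a::ring_1) ^ k \<in> nilpotents \<Longrightarrow> x \<in> nilpotents"
  by (metis nilpotentsE nilpotentsI power_mult)

lemma power_Suc_mult_square_zero:
  fixes x y :: "'a::ring_1"
  assumes "x * x = 0"
  shows "(x * y) ^ Suc n = (x * y + y * x) ^ n * (x * y)"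
proof (induction n)
  case (Suc n)
  have "(x * y + y * x) * (x * y) = (x * y) * (x * y)"
    by (simp add: distrib_right mult.assoc flip: mult.assoc[of x x] add: assms)
  then have "(x * y + y * x) ^ Suc n * (x * y) = (x * y) * (x * y) ^ Suc n"
    by (simp only: power_Suc mult.assoc Suc.IH[symmetric]) (simp flip: mult.assoc)
  then show ?case by simp
qed simp

lemma nilpotent_mult_if_square_zero:
  fixes x y :: "'a::ring_1"
  assumes "x * x = 0" and "x * y + y * x \<in> nilpotents"
  shows "x * y \<in> nilpotents"
proof -
  obtain n where "(x * y + y * x) ^ n = 0" using assms(2) by (rule nilpotentsE)
  then have "(x * y) ^ Suc n = 0" by (simp only: power_Suc_mult_square_zero[OF assms(1)]) simp
  then show ?thesis by (rule nilpotentsI)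
qed

lemma units_of_ringI: "(u::'a::ring_1) * v = 1 \<Longrightarrow> v * u = 1 \<Longrightarrow> u \<in> units_of_ring"
  unfolding units_of_ring_def by blast

lemma units_of_ringE:
  assumes "(u::'a::ring_1) \<in> units_of_ring"
  obtains v where "u * v = 1" and "v * u = 1"
  using assms unfolding units_of_ring_def by blast

lemma units_of_ring_mult:
  assumes "(u::'a::ring_1) \<in> units_of_ring" and "w \<in> units_of_ring"
  shows "u * w \<in> units_of_ring"
proof -
  obtain u' where u: "u * u' = 1" "u' * u = 1" using assms(1) by (rule units_of_ringE)
  obtain w' where w: "w * w' = 1" "w' * w = 1" using assms(2) by (rule units_of_ringE)
  have "u * w * (w' * u') = 1" "w' * u' * (u * w) = 1"
    by (simp_all add: mult.assoc flip: mult.assoc[of w w'] mult.assoc[of u' u] add: u w)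
  then show ?thesis by (rule units_of_ringI)
qed

lemma units_of_ring_uminus: "(u::'a::ring_1) \<in> units_of_ring \<Longrightarrow> - u \<in> units_of_ring"
  by (metis units_of_ringE units_of_ringI minus_mult_minus)

lemma geometric_sum_mult_one_minus:
  fixes q :: "'a::ring_1"
  shows "(1 - q) * (\<Sum>i<n. q ^ i) = 1 - q ^ n"
    and "(\<Sum>i<n. q ^ i) * (1 - q) = 1 - q ^ n"
proof -
  show "(1 - q) * (\<Sum>i<n. q ^ i) = 1 - q ^ n"
  proof (induction n)
    case (Suc n)
    have "(1 - q) * (\<Sum>i<Suc n. q ^ i) = (1 - q) * (\<Sum>i<n. q ^ i) + (1 - q) * q ^ n"
      by (simp add: distrib_left)
    also have "\<dots> = 1 - q ^ Suc n" by (simp only: Suc.IH) (simp add: algebra_simps)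
    finally show ?case .
  qed simp
  show "(\<Sum>i<n. q ^ i) * (1 - q) = 1 - q ^ n"
  proof (induction n)
    case (Suc n)
    have "(\<Sum>i<Suc n. q ^ i) * (1 - q) = (\<Sum>i<n. q ^ i) * (1 - q) + q ^ n * (1 - q)"
      by (simp add: distrib_right)
    also have "\<dots> = 1 - q ^ Suc n" by (simp only: Suc.IH) (simp add: algebra_simps power_commutes)
    finally show ?case .
  qed simp
qed

lemma one_minus_nilpotent_unit:
  assumes "(q::'a::ring_1) \<in> nilpotents"
  shows "1 - q \<in> units_of_ring"
proof -
  obtain n where "q ^ n = 0" using assms by (rule nilpotentsE)
  then show ?thesis
    using geometric_sum_mult_one_minus[of q n] by (intro units_of_ringI) auto
qed

lemma nilpotent_plus_minus_one_unit:
  assumes "(q::'a::ring_1) \<in> nilpotents"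
  shows "q + 1 \<in> units_of_ring" and "q - 1 \<in> units_of_ring"
proof -
  have "1 - (- q) \<in> units_of_ring"
    using assms by (simp only: one_minus_nilpotent_unit nilpotent_uminus_iff)
  then show "q + 1 \<in> units_of_ring" by (simp add: add.commute)
  show "q - 1 \<in> units_of_ring"
    using units_of_ring_uminus[OF one_minus_nilpotent_unit[OF assms]] by simp
qed

lemma unit_minus_commuting_nilpotent:
  fixes u b :: "'a::ring_1"
  assumes u: "u \<in> units_of_ring" and b: "b \<in> nilpotents" and ub: "b * u = u * b"
  shows "u - b \<in> units_of_ring"
proof -
  obtain v where v: "u * v = 1" "v * u = 1" using u by (rule units_of_ringE)
  have "v * b = v * (b * u) * v" by (simp add: mult.assoc v)
  also have "\<dots> = b * v" by (simp add: ub mult.assoc flip: mult.assoc[of v u] add: v)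
  finally have "v * b \<in> nilpotents" using nilpotent_mult_commuting(2) b by metis
  then have "u * (1 - v * b) \<in> units_of_ring"
    using u one_minus_nilpotent_unit units_of_ring_mult by blast
  moreover have "u * (1 - v * b) = u - b" by (simp add: right_diff_distrib flip: mult.assoc add: v)
  ultimately show ?thesis by simp
qed

lemma idempotent_unit_eq_1:
  fixes e :: "'a::ring_1"
  assumes "e * e = e" and "e \<in> units_of_ring"
  shows "e = 1"
proof -
  obtain v where "e * v = 1" by (meson assms(2) units_of_ringE)
  then have "e = e * e * v" by (simp add: mult.assoc)
  with \<open>e * v = 1\<close> show ?thesis by (simp add: assms(1))
qed

lemma one_plus_mult_unit_swap:
  fixes a b :: "'a::ring_1"
  assumes "1 + a * b \<in> units_of_ring"
  shows "1 + b * a \<in> units_of_ring"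
proof -
  obtain v where v: "(1 + a * b) * v = 1" "v * (1 + a * b) = 1" using assms by (rule units_of_ringE)
  have "(1 + b * a) * (1 - b * v * a) = 1 + b * a - b * ((1 + a * b) * v) * a"
    and "(1 - b * v * a) * (1 + b * a) = 1 + b * a - b * (v * (1 + a * b)) * a"
    by (simp_all add: algebra_simps)
  then show ?thesis using v by (intro units_of_ringI) simp_all
qed

section \<open>Strongly nil-clean elements\<close>

lemma idempotent_power_Suc: "(e::'a::ring_1) * e = e \<Longrightarrow> e ^ Suc n = e"
  by (induction n) (simp_all add: mult.assoc)

lemma power_Suc_mult_idempotent:
  fixes x e :: "'a::ring_1"
  assumes "x * e = e * x" and "e * e = e"
  shows "(x * e) ^ Suc n = x ^ Suc n * e"
  by (simp only: power_mult_commuting[OF assms(1)] idempotent_power_Suc[OF assms(2)])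

lemma idempotent_plus_commuting_nilpotent_defect:
  fixes e q :: "'a::ring_1"
  assumes e: "e * e = e" and q: "q \<in> nilpotents" and eq: "e * q = q * e"
  shows "(q + e) - (q + e) * (q + e) \<in> nilpotents"
proof -
  have "(q + e) - (q + e) * (q + e) = q * (1 - q - 2 * e)"
    by (simp add: algebra_simps e eq mult_2)
  moreover have "q * (1 - q - 2 * e) = (1 - q - 2 * e) * q"
    by (simp add: algebra_simps eq mult_2)
  ultimately show ?thesis using nilpotent_mult_commuting(1) q by metis
qed

lemma strongly_nil_clean_elemI_newton:
  fixes a e :: "'a::ring_1"
  assumes "e * a = a * e" and "a - e \<in> nilpotents" and "(e - e * e) ^ m = 0"
  shows "strongly_nil_clean_elem a"
  using assms
proof (induction m arbitrary: e rule: less_induct)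
  case (less m)
  show ?case
  proof (cases "m \<le> 1")
    case True
    then have "(e - e * e) ^ 1 = 0" using less.prems(3) power_eq_0_mono by blast
    then have "e * e = e" by simp
    moreover have "e * (a - e) = (a - e) * e" using less.prems(1) by (simp add: algebra_simps)
    ultimately show ?thesis using less.prems(2)
      unfolding strongly_nil_clean_elem_def idempotents_def
      by (intro exI[of _ e] exI[of _ "a - e"]) simp
  next
    case False
    txt \<open>The defect of the Newton step e' is w^2 (3 + 4w), so the nilpotency index halves.\<close>
    define w where "w = e - e * e"
    define e' where "e' = e * e * (3 - 2 * e)"
    have w: "w ^ m = 0" using less.prems(3) by (simp add: w_def)
    have ea: "e * a = a * e" "e * (a * z) = a * (e * z)" for z
      using less.prems(1) by (simp_all flip: mult.assoc)
    have "e' * a = a * e'" unfolding e'_def by (simp add: algebra_simps ea numeral_mult_commute)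
    moreover have "a - e' \<in> nilpotents"
    proof -
      let ?d = "w * (1 - 2 * e)"
      have "?d = (1 - 2 * e) * w"
        by (simp add: w_def algebra_simps numeral_mult_commute)
      then have "?d \<in> nilpotents"
        using nilpotent_mult_commuting(1) nilpotentsI[OF w] by blast
      moreover have "(a - e) * ?d = ?d * (a - e)"
        by (simp add: w_def algebra_simps ea numeral_mult_commute)
      ultimately have "(a - e) + ?d \<in> nilpotents"
        using nilpotent_add_commuting less.prems(2) by blast
      txt \<open>Numerals are unfolded into sums of 1, so that the simplifier can normalise
        noncommutative polynomials.\<close>
      moreover have "a - e' = (a - e) + ?d"
        unfolding e'_def w_def numeral_Bit0 numeral_Bit1 numeral_One
        by (simp only: ring_distribs mult.assoc mult_1_left mult_1_right) (simp add: algebra_simps)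
      ultimately show ?thesis by (simp only:)
    qed
    moreover have "(e' - e' * e') ^ ((m + 1) div 2) = 0"
    proof -
      have defect: "e' - e' * e' = (w * w) * (3 + 4 * w)"
        unfolding e'_def w_def numeral_Bit0 numeral_Bit1 numeral_One
        by (simp only: ring_distribs mult.assoc mult_1_left mult_1_right) (simp add: algebra_simps)
      have "(w * w) * (3 + 4 * w) = (3 + 4 * w) * (w * w)"
        by (simp add: algebra_simps numeral_mult_commute)
      then have "(e' - e' * e') ^ ((m + 1) div 2)
          = (w * w) ^ ((m + 1) div 2) * (3 + 4 * w) ^ ((m + 1) div 2)"
        unfolding defect by (rule power_mult_commuting)
      moreover have "(w * w) ^ ((m + 1) div 2) = 0"
        using power_eq_0_mono[OF w, of "2 * ((m + 1) div 2)"]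
        by (simp add: power_mult power2_eq_square)
      ultimately show ?thesis by simp
    qed
    ultimately show ?thesis using less.IH[of "(m + 1) div 2" e'] False by simp
  qed
qed

lemma strongly_nil_clean_elem_iff:
  "strongly_nil_clean_elem (a::'a::ring_1) \<longleftrightarrow> a - a * a \<in> nilpotents"
proof
  assume "strongly_nil_clean_elem a"
  then obtain e q where "e * e = e" "q \<in> nilpotents" "a = e + q" "e * q = q * e"
    unfolding strongly_nil_clean_elem_def idempotents_def by blast
  then show "a - a * a \<in> nilpotents"
    using idempotent_plus_commuting_nilpotent_defect by (metis add.commute)
next
  assume "a - a * a \<in> nilpotents"
  then obtain m where "(a - a * a) ^ m = 0" by (rule nilpotentsE)
  moreover have "a - a \<in> nilpotents" by (simp add: nilpotentsI[of 0 1])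
  ultimately show "strongly_nil_clean_elem a" by (intro strongly_nil_clean_elemI_newton) auto
qed

lemma strongly_nil_clean_elem_uminus_iff:
  "strongly_nil_clean_elem (- a::'a::ring_1) \<longleftrightarrow> a + a * a \<in> nilpotents"
  using nilpotent_uminus_iff[of "a + a * a"] by (simp add: strongly_nil_clean_elem_iff)

lemma strongly_nil_clean_unit:
  fixes u :: "'a::ring_1"
  assumes "u \<in> units_of_ring" and "strongly_nil_clean_elem u"
  shows "u - 1 \<in> nilpotents"
proof -
  obtain e q where e: "e * e = e" and q: "q \<in> nilpotents" and u: "u = e + q" and "e * q = q * e"
    using assms(2) unfolding strongly_nil_clean_elem_def idempotents_def by blast
  then have "q * u = u * q" by (simp add: algebra_simps)
  then have "u - q \<in> units_of_ring" using unit_minus_commuting_nilpotent assms(1) q by blast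
  then have "e = 1" using idempotent_unit_eq_1 e u by simp
  then show ?thesis using q u by simp
qed

section \<open>The Jacobson radical\<close>

definition jacobson_radical :: "'a::ring_1 set" where
  "jacobson_radical = {z. \<forall>r. 1 + r * z \<in> units_of_ring}"

lemma jacobson_radicalI: "(\<And>r. 1 + r * z \<in> units_of_ring) \<Longrightarrow> z \<in> jacobson_radical"
  unfolding jacobson_radical_def by blast

lemma jacobson_radicalD: "z \<in> jacobson_radical \<Longrightarrow> 1 + r * z \<in> units_of_ring"
  unfolding jacobson_radical_def by blast

lemma jacobson_radical_add:
  fixes z w :: "'a::ring_1"
  assumes z: "z \<in> jacobson_radical" and w: "w \<in> jacobson_radical"
  shows "z + w \<in> jacobson_radical"
proof (rule jacobson_radicalI)
  fix r
  obtain v where v: "(1 + r * z) * v = 1"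
    using jacobson_radicalD[OF z] by (rule units_of_ringE)
  have "(1 + r * z) * (1 + (v * r) * w) \<in> units_of_ring"
    using jacobson_radicalD[OF z] jacobson_radicalD[OF w] by (rule units_of_ring_mult)
  moreover have "(1 + r * z) * (1 + (v * r) * w) = (1 + r * z) + ((1 + r * z) * v) * (r * w)"
    by (simp add: algebra_simps)
  ultimately show "1 + r * (z + w) \<in> units_of_ring" by (simp add: v distrib_left add.assoc)
qed

lemma jacobson_radical_mult_left:
  "(z::'a::ring_1) \<in> jacobson_radical \<Longrightarrow> s * z \<in> jacobson_radical"
  by (metis jacobson_radicalD jacobson_radicalI mult.assoc)

lemma jacobson_radical_mult_right:
  assumes "(z::'a::ring_1) \<in> jacobson_radical"
  shows "z * s \<in> jacobson_radical"
proof (rule jacobson_radicalI)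
  fix r
  have "1 + s * (r * z) \<in> units_of_ring"
    using jacobson_radicalD[OF assms, of "s * r"] by (simp add: mult.assoc)
  then show "1 + r * (z * s) \<in> units_of_ring"
    using one_plus_mult_unit_swap by (metis mult.assoc)
qed

lemma jacobson_radical_diff:
  assumes "(z::'a::ring_1) \<in> jacobson_radical" and "w \<in> jacobson_radical"
  shows "z - w \<in> jacobson_radical"
  using jacobson_radical_add[OF assms(1) jacobson_radical_mult_left[OF assms(2), of "- 1"]] by simp

lemma jacobson_radical_power_diff:
  fixes x y :: "'a::ring_1"
  assumes "x - y \<in> jacobson_radical"
  shows "x ^ n - y ^ n \<in> jacobson_radical"
proof (induction n)
  case 0
  show ?case using jacobson_radical_diff[OF assms assms] by simp
next
  case (Suc n)
  have "x ^ Suc n - y ^ Suc n = x ^ n * (x - y) + (x ^ n - y ^ n) * y"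
    by (simp add: algebra_simps power_commutes)
  then show ?case
    using jacobson_radical_add jacobson_radical_mult_left[OF assms] jacobson_radical_mult_right[OF Suc]
    by metis
qed

lemma jacobson_radicalI_nilpotent:
  "(\<And>r. r * (z::'a::ring_1) \<in> nilpotents) \<Longrightarrow> z \<in> jacobson_radical"
  using nilpotent_plus_minus_one_unit(1) by (metis add.commute jacobson_radicalI)

definition central :: "'a::ring_1 \<Rightarrow> bool" where
  "central k \<longleftrightarrow> (\<forall>z. k * z = z * k)"

lemma centralD: "central k \<Longrightarrow> k * z = z * k"
  unfolding central_def by blast

lemma central_numeral: "central (numeral n :: 'a::ring_1)"
  unfolding central_def by (simp add: numeral_mult_commute)

lemma central_mult: "central (a::'a::ring_1) \<Longrightarrow> central b \<Longrightarrow> central (a * b)"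
  unfolding central_def by (metis mult.assoc)

lemma central_one_minus: "central (k::'a::ring_1) \<Longrightarrow> central (1 - k)"
  unfolding central_def by (simp add: left_diff_distrib right_diff_distrib)

lemma central_idempotent_mult_mult:
  fixes k :: "'a::ring_1"
  assumes "k * k = k" and "central k"
  shows "(k * z) * (k * w) = k * (z * w)"
proof -
  have "(k * z) * (k * w) = k * ((z * k) * w)" by (simp only: mult.assoc)
  also have "\<dots> = (k * k) * (z * w)" by (simp only: centralD[OF assms(2), of z, symmetric] mult.assoc)
  finally show ?thesis by (simp only: assms(1))
qed

lemma nilpotent_of_central_idempotent_parts:
  fixes k x :: "'a::ring_1"
  assumes k: "k * k = k" "central k" and "k * x \<in> nilpotents" and "(1 - k) * x \<in> nilpotents"
  shows "x \<in> nilpotents"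
proof -
  have "k * (1 - k) = 0" "(1 - k) * k = 0" by (simp_all add: algebra_simps k(1))
  moreover have "x * (1 - k) = (1 - k) * x" "x * k = k * x"
    using centralD[OF k(2), of x] by (simp_all add: algebra_simps)
  then have "(k * x) * ((1 - k) * x) = (k * (1 - k)) * (x * x)"
    "((1 - k) * x) * (k * x) = ((1 - k) * k) * (x * x)"
    by (simp_all only: mult.assoc flip: mult.assoc[of x])
  ultimately have "(k * x) * ((1 - k) * x) = ((1 - k) * x) * (k * x)" by simp
  then have "k * x + (1 - k) * x \<in> nilpotents"
    using nilpotent_add_commuting assms(3,4) by blast
  then show ?thesis by (simp add: algebra_simps)
qed

lemma eq_0_if_coprime_annihilators:
  fixes g :: "'a::ring_1" and m n :: int
  assumes "coprime m n" and "of_int m * g = 0" and "of_int n * g = 0"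
  shows "g = 0"
proof -
  obtain u v where "u * m + v * n = 1"
    using bezout_int[of m n] assms(1) by (auto simp: coprime_iff_gcd_eq_1)
  then have "g = of_int (u * m + v * n) * g" by simp
  also have "\<dots> = of_int u * (of_int m * g) + of_int v * (of_int n * g)"
    by (simp add: distrib_right mult.assoc)
  finally show ?thesis using assms(2,3) by simp
qed

lemma central_idempotent_of_coprime_product:
  fixes m n :: int
  assumes "coprime m n" and "(of_int (m * n) :: 'a) = 0"
  obtains k :: "'a::ring_1" where "k * k = k" "central k" "of_int m * k = 0" "of_int n * (1 - k) = 0"
proof -
  obtain u v where uv: "u * m + v * n = 1"
    using bezout_int[of m n] assms(1) by (auto simp: coprime_iff_gcd_eq_1)
  define k :: 'a where "k = of_int (v * n)"
  have mn: "of_int (z * (m * n)) = (0::'a)" for z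
    using assms(2) by simp
  have "v * n * (v * n) - (v * n - u * v * (m * n)) = v * n * (u * m + v * n - 1)"
    and "n * (1 - v * n) - u * (m * n) = n * (1 - (u * m + v * n))"
    by (simp_all add: algebra_simps)
  then have "v * n * (v * n) = v * n - u * v * (m * n)" and "n * (1 - v * n) = u * (m * n)"
    using uv by simp_all
  moreover have "1 - k = of_int (1 - v * n)" by (simp add: k_def)
  ultimately have idem: "k * k = k" and n: "of_int n * (1 - k) = 0"
    unfolding k_def by (simp_all only: of_int_mult[symmetric]) (simp_all only: of_int_diff mn diff_zero)
  have "m * (v * n) = v * (m * n)" by (simp add: algebra_simps)
  then have m: "of_int m * k = 0" unfolding k_def by (simp only: of_int_mult[symmetric] mn)
  have "central k" unfolding central_def k_def by (metis mult_of_int_commute)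
  from idem this m n show thesis by (rule that)
qed

lemma WUU_iff:
  "WUU TYPE('a::ring_1) \<longleftrightarrow>
     (\<forall>u::'a \<in> units_of_ring. u - 1 \<in> nilpotents \<or> u + 1 \<in> nilpotents)"
proof
  assume W: "WUU TYPE('a)"
  show "\<forall>u::'a \<in> units_of_ring. u - 1 \<in> nilpotents \<or> u + 1 \<in> nilpotents"
  proof
    fix u :: 'a
    assume "u \<in> units_of_ring"
    then obtain q where "q \<in> nilpotents" "u = q + 1 \<or> u = q - 1"
      using W unfolding WUU_def by blast
    then show "u - 1 \<in> nilpotents \<or> u + 1 \<in> nilpotents" by auto
  qed
next
  assume units: "\<forall>u::'a \<in> units_of_ring. u - 1 \<in> nilpotents \<or> u + 1 \<in> nilpotents"
  show "WUU TYPE('a)"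
    unfolding WUU_def
  proof (intro set_eqI iffI)
    fix u :: 'a
    assume "u \<in> units_of_ring"
    then have "u = (u - 1) + 1 \<and> u - 1 \<in> nilpotents \<or> u = (u + 1) - 1 \<and> u + 1 \<in> nilpotents"
      using units by simp
    then show "u \<in> {q + 1 |q. q \<in> nilpotents} \<union> {q - 1 |q. q \<in> nilpotents}" by blast
  qed (auto intro: nilpotent_plus_minus_one_unit)
qed

lemma WUU_unit:
  assumes "WUU TYPE('a::ring_1)" and "(u::'a) \<in> units_of_ring"
  shows "u - 1 \<in> nilpotents \<or> u + 1 \<in> nilpotents"
  using assms unfolding WUU_iff by blast

lemma WUU_jacobson_radical_nilpotent:
  assumes W: "WUU TYPE('a::ring_1)" and z: "(z::'a) \<in> jacobson_radical"
  shows "z \<in> nilpotents"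
proof -
  have "(1 + z) - 1 = z" "(1 + z) + 1 = 2 + z" "(1 - z) - 1 = - z" "(1 - z) + 1 = 2 - z"
    by simp_all
  then have plus: "z \<in> nilpotents \<or> 2 + z \<in> nilpotents"
    and minus: "- z \<in> nilpotents \<or> 2 - z \<in> nilpotents"
    using WUU_unit[OF W jacobson_radicalD[OF z, of 1]] WUU_unit[OF W jacobson_radicalD[OF z, of "- 1"]]
    by (simp_all only: mult_1_left mult_minus1 diff_conv_add_uminus[symmetric])
  show ?thesis
  proof (cases "2 + z \<in> nilpotents \<and> 2 - z \<in> nilpotents")
    case True
    define p where "p = 2 + z"
    have "2 - z = 4 - p" by (simp add: p_def)
    moreover have "p * (4 - p) = (4 - p) * p"
      by (simp add: right_diff_distrib left_diff_distrib numeral_mult_commute)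
    ultimately have "p * (2 - z) = (2 - z) * p" by (simp only:)
    then have "p + (2 - z) \<in> nilpotents"
      using nilpotent_add_commuting True unfolding p_def by blast
    then have "(2::'a) ^ 2 \<in> nilpotents" by (simp add: p_def)
    then have "(2::'a) \<in> nilpotents" by (rule nilpotent_of_power_nilpotent)
    then have "p - 2 \<in> nilpotents"
      using nilpotent_diff_commuting[OF centralD[OF central_numeral, symmetric]] True
      unfolding p_def by blast
    then show ?thesis by (simp add: p_def)
  qed (use plus minus nilpotent_uminus_iff in blast)
qed

lemma WUU_nilpotent_mod_jacobson_radical:
  fixes x y :: "'a::ring_1"
  assumes "WUU TYPE('a)" and "x - y \<in> jacobson_radical" and "y \<in> nilpotents"
  shows "x \<in> nilpotents"
proof -
  obtain n where "y ^ n = 0" using assms(3) by (rule nilpotentsE)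
  then have "x ^ n \<in> jacobson_radical" using jacobson_radical_power_diff[OF assms(2), of n] by simp
  then show ?thesis
    using WUU_jacobson_radical_nilpotent[OF assms(1)] nilpotent_of_power_nilpotent by blast
qed

section \<open>The summand in which 2 is nilpotent\<close>

lemma WUU_2_part_unit_unipotent:
  fixes k u :: "'a::ring_1"
  assumes W: "WUU TYPE('a)" and k: "k * k = k" "central k" "2 * k \<in> nilpotents"
    and u: "u \<in> units_of_ring"
  shows "k * (u - 1) \<in> nilpotents"
  using WUU_unit[OF W u]
proof
  assume "u - 1 \<in> nilpotents"
  then show ?thesis using nilpotent_mult_commuting(2) centralD[OF k(2)] by metis
next
  assume "u + 1 \<in> nilpotents"
  then have "k * (u + 1) \<in> nilpotents" using nilpotent_mult_commuting(2) centralD[OF k(2)] by metis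
  moreover have "k * (u + 1) * (2 * k) = (2 * k) * (k * (u + 1))"
    using centralD[OF central_mult[OF central_numeral k(2)]] by metis
  moreover have "k * (u - 1) = k * (u + 1) - 2 * k" by (simp add: algebra_simps mult_2)
  ultimately show ?thesis using nilpotent_diff_commuting k(3) by metis
qed

lemma WUU_2_part_square_zero_mult_nilpotent:
  fixes k x y :: "'a::ring_1"
  assumes W: "WUU TYPE('a)" and k: "k * k = k" "central k" "2 * k \<in> nilpotents"
    and x: "x * x = 0" "k * x = x" and y: "y * y = 0" "k * y = y"
  shows "x * y \<in> nilpotents"
proof -
  txt \<open>The unit u and its inverse v are unipotent with commuting nilpotent parts, whose sum
    is x y + y x.\<close>
  define u where "u = (1 + x) * (1 + y)"
  define v where "v = (1 - y) * (1 - x)"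
  have xx: "x * (x * z) = 0" and yy: "y * (y * z) = 0" for z
    using x(1) y(1) by (simp_all flip: mult.assoc)
  have uv: "u * v = 1" "v * u = 1"
    unfolding u_def v_def by (simp_all add: algebra_simps x(1) y(1) xx yy)
  then have "u \<in> units_of_ring" "v \<in> units_of_ring" by (auto intro: units_of_ringI)
  moreover have "k * (u - 1) = u - 1" "k * (v - 1) = v - 1"
    unfolding u_def v_def by (simp_all add: algebra_simps x(2) y(2) flip: mult.assoc)
  ultimately have "u - 1 \<in> nilpotents" "v - 1 \<in> nilpotents"
    using WUU_2_part_unit_unipotent[OF W k] by metis+
  moreover have "(u - 1) * (v - 1) = (v - 1) * (u - 1)" by (simp add: algebra_simps uv)
  ultimately have "(u - 1) + (v - 1) \<in> nilpotents" by (rule nilpotent_add_commuting[rotated])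
  moreover have "(u - 1) + (v - 1) = x * y + y * x" unfolding u_def v_def by (simp add: algebra_simps)
  ultimately show ?thesis using nilpotent_mult_if_square_zero[OF x(1)] by simp
qed

lemma WUU_2_part_peirce_corner_jacobson_radical:
  fixes k f x :: "'a::ring_1"
  assumes W: "WUU TYPE('a)" and k: "k * k = k" "central k" "2 * k \<in> nilpotents"
    and f: "f * f = f" and x: "f * x = x" "x * f = 0" "k * x = x"
  shows "x \<in> jacobson_radical"
proof (rule jacobson_radicalI_nilpotent)
  fix r
  define y where "y = (1 - f) * (k * r) * f"
  have "x * x = 0" by (metis x(1,2) mult.assoc mult_zero_left)
  moreover have "y * y = (1 - f) * (k * r) * (f * (1 - f)) * (k * r) * f"
    unfolding y_def by (simp add: mult.assoc)
  then have "y * y = 0" by (simp add: algebra_simps f)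
  moreover have "k * y = y" unfolding y_def
    by (simp add: centralD[OF k(2), of "1 - f"] flip: mult.assoc) (simp add: mult.assoc k(1))
  ultimately have "x * y \<in> nilpotents" using WUU_2_part_square_zero_mult_nilpotent[OF W k] x(3) by blast
  moreover have "x * y = x * (r * f)"
    unfolding y_def using x(2,3) centralD[OF k(2), of x]
    by (simp add: algebra_simps flip: mult.assoc)
  ultimately have "(r * f) * x \<in> nilpotents" by (simp add: nilpotent_mult_swap)
  then show "r * x \<in> nilpotents" by (simp add: mult.assoc x(1))
qed

lemma WUU_2_part_idempotent_plus_nilpotent_defect:
  fixes k e q :: "'a::ring_1"
  assumes W: "WUU TYPE('a)" and k: "k * k = k" "central k" "2 * k \<in> nilpotents"
    and e: "e * e = e" "k * e = e" and q: "q \<in> nilpotents" "k * q = q"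
  shows "(q + e) - (q + e) * (q + e) \<in> nilpotents"
proof -
  have ee: "e * (e * z) = e * z" and ke: "k * (e * z) = e * z" and kq: "k * (q * z) = q * z" for z
    using e q(2) by (simp_all flip: mult.assoc)
  have kc: "k * ((1 - e) * z) = (1 - e) * (k * z)" for z
    by (simp add: centralD[OF k(2), of "1 - e"] flip: mult.assoc)
  define j where "j = e * q * (1 - e) + (1 - e) * q * e"
  have "e * q * (1 - e) \<in> jacobson_radical"
    using e(1) by (intro WUU_2_part_peirce_corner_jacobson_radical[OF W k e(1)])
      (simp_all add: algebra_simps mult.assoc ee ke)
  moreover have "(1 - e) * q * e \<in> jacobson_radical"
    by (intro WUU_2_part_peirce_corner_jacobson_radical[OF W k, of "1 - e"])
      (simp_all add: algebra_simps mult.assoc e(1) ee ke kq kc)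
  ultimately have j: "j \<in> jacobson_radical" unfolding j_def by (rule jacobson_radical_add)
  txt \<open>Modulo the radical, q is congruent to its Peirce-diagonal part s, which commutes
    with e.\<close>
  define s where "s = q - j"
  have "s - q \<in> jacobson_radical"
    using jacobson_radical_mult_left[OF j, of "- 1"] by (simp add: s_def)
  then have s: "s \<in> nilpotents" using WUU_nilpotent_mod_jacobson_radical[OF W _ q(1)] by blast
  have "e * s = s * e" unfolding s_def j_def by (simp add: algebra_simps mult.assoc e(1) ee)
  then have "(s + e) - (s + e) * (s + e) \<in> nilpotents"
    using idempotent_plus_commuting_nilpotent_defect[OF e(1) s] by blast
  moreover have "((q + e) - (q + e) * (q + e)) - ((s + e) - (s + e) * (s + e)) \<in> jacobson_radical"
  proof -
    have "(q + e) - (s + e) \<in> jacobson_radical" using j by (simp add: s_def)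
    then have "(q + e) ^ 2 - (s + e) ^ 2 \<in> jacobson_radical" by (rule jacobson_radical_power_diff)
    then have "j - ((q + e) * (q + e) - (s + e) * (s + e)) \<in> jacobson_radical"
      using j jacobson_radical_diff by (simp add: power2_eq_square)
    then show ?thesis by (simp add: s_def algebra_simps)
  qed
  ultimately show ?thesis using WUU_nilpotent_mod_jacobson_radical[OF W] by blast
qed

lemma defects_nilpotent_iff_2_part:
  fixes k b :: "'a::ring_1"
  assumes k: "k * k = k" "central k" "2 * k \<in> nilpotents" and b: "k * b = b"
  shows "b - b * b \<in> nilpotents \<longleftrightarrow> b + b * b \<in> nilpotents"
proof -
  define d where "d = 2 * (b * b)"
  have "d = (2 * k) * (b * b)" unfolding d_def by (simp add: mult.assoc b flip: mult.assoc[of k b])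
  then have d: "d \<in> nilpotents"
    using nilpotent_mult_commuting(1) centralD[OF central_mult[OF central_numeral k(2)]] k(3) by metis
  have "(b - b * b) * d = d * (b - b * b)" "(b + b * b) * d = d * (b + b * b)"
    unfolding d_def by (simp_all add: algebra_simps numeral_mult_commute)
  moreover have "b + b * b = (b - b * b) + d" "b - b * b = (b + b * b) - d"
    unfolding d_def by (simp_all add: algebra_simps mult_2)
  ultimately show ?thesis
    using nilpotent_add_commuting[OF _ _ d] nilpotent_diff_commuting[OF _ _ d] by metis
qed

lemma WUU_2_part_defects_nilpotent:
  fixes k a q e :: "'a::ring_1"
  assumes W: "WUU TYPE('a)" and k: "k * k = k" "central k" "2 * k \<in> nilpotents"
    and q: "q \<in> nilpotents" and e: "e * e = e" and a: "a = q + e \<or> a = q - e"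
  shows "k * (a - a * a) \<in> nilpotents \<and> k * (a + a * a) \<in> nilpotents"
proof -
  note kk = central_idempotent_mult_mult[OF k(1,2)]
  have kz: "k * (k * z) = k * z" for z using k(1) by (simp flip: mult.assoc)
  have kq: "k * q \<in> nilpotents" "- (k * q) \<in> nilpotents"
    using nilpotent_mult_commuting(2)[OF centralD[OF k(2), of q, symmetric] q] nilpotent_uminus_iff by auto
  have ke: "(k * e) * (k * e) = k * e" by (simp add: kk e)
  note defect = WUU_2_part_idempotent_plus_nilpotent_defect[OF W k ke kz]
  have "k * a - (k * a) * (k * a) \<in> nilpotents \<or> k * a + (k * a) * (k * a) \<in> nilpotents"
    using a
  proof
    assume "a = q + e"
    then show ?thesis using defect[OF kq(1) kz] by (simp add: distrib_left)
  next
    assume "a = q - e"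
    then have "- (k * q) + k * e = - (k * a)" by (simp add: right_diff_distrib)
    moreover have "k * - (k * q) = - (k * q)" by (simp add: kz)
    ultimately have "- (k * a) - (- (k * a)) * (- (k * a)) \<in> nilpotents"
      using defect[OF kq(2)] by simp
    then show ?thesis using nilpotent_uminus_iff[of "k * a + (k * a) * (k * a)"] by simp
  qed
  moreover have
    "k * a - (k * a) * (k * a) \<in> nilpotents \<longleftrightarrow> k * a + (k * a) * (k * a) \<in> nilpotents"
    using defects_nilpotent_iff_2_part[OF k kz] .
  ultimately show ?thesis by (simp add: kk right_diff_distrib distrib_left)
qed

section \<open>The summand in which 3 is nilpotent\<close>

lemma idempotent_eq_0_in_3_part:
  fixes g :: "'a::ring_1"
  assumes g: "g * g = g" and g2: "2 * g \<in> nilpotents" and g3: "3 ^ n * g = 0"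
  shows "g = 0"
proof -
  obtain N where "(2 * g) ^ N = 0" using g2 by (rule nilpotentsE)
  then have "(2 * g) ^ Suc N = 0" by simp
  then have "2 ^ Suc N * g = 0"
    by (simp only: power_Suc_mult_idempotent[OF numeral_mult_commute(1) g])
  then show ?thesis
    using eq_0_if_coprime_annihilators[of "2 ^ Suc N" "3 ^ n" g] g3 by simp
qed

lemma WUU_3_part_idempotent_trivial:
  fixes c f :: "'a::ring_1"
  assumes W: "WUU TYPE('a)" and c: "c * c = c" "central c" "3 ^ n * c = 0"
    and f: "f * f = f" "c * f = f"
  shows "f = 0 \<or> f = c"
proof -
  have "(1 - 2 * f) * (1 - 2 * f) = 1"
    unfolding numeral_Bit0 numeral_One
    by (simp only: ring_distribs mult.assoc mult_1_left mult_1_right f(1)) (simp add: algebra_simps)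
  then have "1 - 2 * f \<in> units_of_ring" by (blast intro: units_of_ringI)
  then have "(1 - 2 * f) - 1 \<in> nilpotents \<or> (1 - 2 * f) + 1 \<in> nilpotents"
    by (rule WUU_unit[OF W])
  moreover have f3: "3 ^ n * f = 0" by (metis c(3) f(2) mult.assoc mult_zero_left)
  moreover have "c * ((1 - 2 * f) + 1) = 2 * (c - f)"
    by (simp add: algebra_simps mult_2 mult_2_right f(2))
  moreover have "c * ((1 - 2 * f) + 1) \<in> nilpotents" if "(1 - 2 * f) + 1 \<in> nilpotents"
    using nilpotent_mult_commuting(2)[OF centralD[OF c(2), symmetric] that] .
  moreover have "(c - f) * (c - f) = c - f"
    using centralD[OF c(2), of f] by (simp add: algebra_simps c(1) f)
  moreover have "3 ^ n * (c - f) = 0" by (simp add: right_diff_distrib c(3) f3)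
  ultimately show ?thesis
    using idempotent_eq_0_in_3_part[OF f(1) _ f3] idempotent_eq_0_in_3_part[of "c - f"]
      nilpotent_uminus_iff[of "2 * f"]
    by auto
qed

lemma WUU_3_part_defect_nilpotent:
  fixes c a q e :: "'a::ring_1"
  assumes W: "WUU TYPE('a)" and c: "c * c = c" "central c" "3 ^ n * c = 0"
    and q: "q \<in> nilpotents" and e: "e * e = e" and a: "a = q + e \<or> a = q - e"
  shows "c * (a - a * a) \<in> nilpotents \<or> c * (a + a * a) \<in> nilpotents"
proof -
  note cc = central_idempotent_mult_mult[OF c(1,2)]
  define p where "p = c * q"
  have p: "p \<in> nilpotents"
    unfolding p_def using nilpotent_mult_commuting(2)[OF centralD[OF c(2), of q, symmetric] q] .
  have "(c * e) * (c * e) = c * e" by (simp add: cc e)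
  moreover have "c * (c * e) = c * e" by (simp add: c(1) flip: mult.assoc)
  ultimately have "c * e = 0 \<or> c * e = c" by (rule WUU_3_part_idempotent_trivial[OF W c])
  then have ce: "(c * e) * p = p * (c * e)" using centralD[OF c(2), of p] by auto
  have ce_idem: "c * e \<in> idempotents" by (simp add: idempotents_def cc e)
  have "strongly_nil_clean_elem (c * a) \<or> strongly_nil_clean_elem (- (c * a))"
    using a
  proof
    assume "a = q + e"
    then have "c * a = c * e + p" by (simp add: p_def distrib_left add.commute)
    then show ?thesis
      using ce_idem p ce unfolding strongly_nil_clean_elem_def by blast
  next
    assume "a = q - e"
    then have "- (c * a) = c * e + - p" by (simp add: p_def right_diff_distrib)
    moreover have "(c * e) * - p = - p * (c * e)" using ce by simp
    ultimately show ?thesis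
      using ce_idem p nilpotent_uminus_iff unfolding strongly_nil_clean_elem_def by blast
  qed
  then show ?thesis
    unfolding strongly_nil_clean_elem_uminus_iff unfolding strongly_nil_clean_elem_iff
    by (simp add: cc right_diff_distrib distrib_left)
qed

lemma WUU_GWNC_decomposition:
  assumes "WUU TYPE('a)" and "GWNC TYPE('a)"
  obtains q e :: "'a::ring_1" where "q \<in> nilpotents" and "e * e = e" and "a = q + e \<or> a = q - e"
proof (cases "a \<in> units_of_ring")
  case True
  then have "a - 1 \<in> nilpotents \<or> a + 1 \<in> nilpotents" by (rule WUU_unit[OF assms(1)])
  then show ?thesis
    using that[of "a - 1" 1] that[of "a + 1" 1] by auto
next
  case False
  then show ?thesis using assms(2) that unfolding GWNC_def idempotents_def by blast
qed

lemma WUU_GWNC_six_nilpotent: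
  assumes "WUU TYPE('a::ring_1)" and "GWNC TYPE('a)"
  shows "(6::'a) \<in> nilpotents"
proof -
  obtain q e :: 'a where q: "q \<in> nilpotents" and e: "e * e = e" and "2 = q + e \<or> 2 = q - e"
    by (rule WUU_GWNC_decomposition[OF assms, of 2])
  then have "e = 2 - q \<or> e = q - 2" by (auto simp: eq_diff_eq add.commute)
  then consider "e = 2 - q" | "e = q - 2" by blast
  then show ?thesis
  proof cases
    case 1
    have "q * (3 - q) - 2 = e - e * e"
      unfolding 1 numeral_Bit0 numeral_Bit1 numeral_One
      by (simp only: ring_distribs mult_1_left mult_1_right) (simp add: algebra_simps)
    then have "q * (3 - q) = 2" using e by simp
    moreover have "q * (3 - q) \<in> nilpotents"
      using nilpotent_mult_commuting(1)[OF _ q, of "3 - q"]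
      by (simp add: right_diff_distrib left_diff_distrib numeral_mult_commute)
    ultimately have "(2::'a) \<in> nilpotents" by simp
    then have "(2::'a) * 3 \<in> nilpotents" by (rule nilpotent_mult_commuting(1)[rotated]) simp
    then show ?thesis by simp
  next
    case 2
    have "q * (5 - q) - 6 = e - e * e"
      unfolding 2 numeral_Bit0 numeral_Bit1 numeral_One
      by (simp only: ring_distribs mult_1_left mult_1_right) (simp add: algebra_simps)
    then have "q * (5 - q) = 6" using e by simp
    moreover have "q * (5 - q) \<in> nilpotents"
      using nilpotent_mult_commuting(1)[OF _ q, of "5 - q"]
      by (simp add: right_diff_distrib left_diff_distrib numeral_mult_commute)
    ultimately show ?thesis by simp
  qed
qed

lemma WUU_GWNC_2_3_splitting:
  assumes "WUU TYPE('a)" and "GWNC TYPE('a)"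
  obtains k :: "'a::ring_1" and n
  where "k * k = k" "central k" "2 * k \<in> nilpotents" "3 ^ n * (1 - k) = 0"
proof -
  obtain n where "(6::'a) ^ n = 0" using WUU_GWNC_six_nilpotent[OF assms] by (rule nilpotentsE)
  then have "(of_int (2 ^ n * 3 ^ n) :: 'a) = 0" by (simp flip: power_mult_distrib)
  then obtain k :: 'a where k: "k * k = k" "central k" and "2 ^ n * k = 0" "3 ^ n * (1 - k) = 0"
    using central_idempotent_of_coprime_product[of "2 ^ n" "3 ^ n"] by auto
  moreover from this have "(2 * k) ^ Suc n = 0"
    by (simp only: power_Suc_mult_idempotent[OF centralD[OF central_numeral] k(1)])
      (simp add: mult.assoc)
  ultimately show thesis using that nilpotentsI by blast
qed

lemma WUU_GWNC_imp_strongly_weakly_nil_clean: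
  assumes W: "WUU TYPE('a::ring_1)" and G: "GWNC TYPE('a)"
  shows "strongly_weakly_nil_clean TYPE('a)"
  unfolding strongly_weakly_nil_clean_def
proof
  fix a :: 'a
  obtain k :: 'a and n where k: "k * k = k" "central k" "2 * k \<in> nilpotents"
    and c: "3 ^ n * (1 - k) = 0"
    by (rule WUU_GWNC_2_3_splitting[OF W G])
  have "(1 - k) * (1 - k) = 1 - k" by (simp add: algebra_simps k(1))
  note part3 = WUU_3_part_defect_nilpotent[OF W this central_one_minus[OF k(2)] c]
  obtain q e where "q \<in> nilpotents" "e * e = e" "a = q + e \<or> a = q - e"
    by (rule WUU_GWNC_decomposition[OF W G])
  with WUU_2_part_defects_nilpotent[OF W k] part3
  have "a - a * a \<in> nilpotents \<or> a + a * a \<in> nilpotents"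
    using nilpotent_of_central_idempotent_parts[OF k(1,2)] by blast
  then show "strongly_nil_clean_elem a \<or> strongly_nil_clean_elem (- a)"
    unfolding strongly_nil_clean_elem_uminus_iff unfolding strongly_nil_clean_elem_iff .
qed

lemma strongly_weakly_nil_clean_imp_WUU:
  assumes "strongly_weakly_nil_clean TYPE('a::ring_1)"
  shows "WUU TYPE('a)"
  unfolding WUU_iff
proof
  fix u :: 'a
  assume u: "u \<in> units_of_ring"
  have "strongly_nil_clean_elem u \<or> strongly_nil_clean_elem (- u)"
    using assms unfolding strongly_weakly_nil_clean_def by blast
  then have "u - 1 \<in> nilpotents \<or> - u - 1 \<in> nilpotents"
    using strongly_nil_clean_unit u units_of_ring_uminus by blast
  then have "u - 1 \<in> nilpotents \<or> - (u + 1) \<in> nilpotents"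
    by (simp only: minus_add_distrib diff_conv_add_uminus)
  then show "u - 1 \<in> nilpotents \<or> u + 1 \<in> nilpotents"
    using nilpotent_uminus_iff by blast
qed

lemma strongly_weakly_nil_clean_imp_GWNC:
  assumes "strongly_weakly_nil_clean TYPE('a::ring_1)"
  shows "GWNC TYPE('a)"
  unfolding GWNC_def
proof (intro allI impI)
  fix a :: 'a
  have "strongly_nil_clean_elem a \<or> strongly_nil_clean_elem (- a)"
    using assms unfolding strongly_weakly_nil_clean_def by blast
  then obtain e q where "e \<in> idempotents" "q \<in> nilpotents" "a = e + q \<or> - a = e + q"
    unfolding strongly_nil_clean_elem_def by blast
  then show "\<exists>q e. q \<in> nilpotents \<and> e \<in> idempotents \<and> (a = q + e \<or> a = q - e)"
    using nilpotent_uminus_iff by (metis add.commute minus_add_cancel minus_diff_eq diff_conv_add_uminus)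
qed

theorem lemma2p29:
  shows "strongly_weakly_nil_clean TYPE('a::ring_1) \<longleftrightarrow>
         (WUU TYPE('a) \<and> GWNC TYPE('a))"
  using strongly_weakly_nil_clean_imp_WUU strongly_weakly_nil_clean_imp_GWNC
    WUU_GWNC_imp_strongly_weakly_nil_clean by blast

end
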